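(* Consider a cellular network with $n$ base stations $\mathcal{N}=\{1,\dots,n\}$, base station $i$ serving a nonempty set $\mathcal{J}_i$ of users (pairwise disjoint), channel gains $g_{kj}>0$ and noise power $\sigma^2>0$. Let a load vector $\mathbf{x}>\mathbf{0}$ and a rate vector $\mathbf{r}>\mathbf{0}$ be given. For $\mathbf{p}\in\mathbb{R}^n_+$ and each $i$, let $h_i(\bar{\mathbf{p}}_i;\mathbf{x},\mathbf{r})$ be the unique $p_i>0$ satisfying $$1=\sum_{j\in\mathcal{J}_i}\frac{r_{ij}/x_i}{\log\Big(1+p_i\,\frac{g_{ij}}{\sum_{k\ne i}p_kg_{kj}x_k+\sigma^2}\Big)},$$ and let $\mathbf{h}(\mathbf{p};\mathbf{x},\mathbf{r})=(h_1(\bar{\mathbf{p}}_1;\mathbf{x},\mathbf{r}),\dots,h_n(\bar{\mathbf{p}}_n;\mathbf{x},\mathbf{r}))^T$. Then $\mathbf{p}\mapsto\mathbf{h}(\mathbf{p};\mathbf{x},\mathbf{r})$ is a standard interference function.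
   Context: $\log$ is natural logarithm; vector inequalities are componentwise; $\bar{\mathbf{p}}_i$ denotes $\mathbf{p}$ with its $i$th component removed. A function $\mathbf{I}:\mathbb{R}^n_+\to\mathbb{R}^n_+$ is a standard interference function if for all $\mathbf{p}\ge\mathbf{0}$: (positivity) $\mathbf{I}(\mathbf{p})>\mathbf{0}$; (monotonicity) $\mathbf{p}\ge\mathbf{p}'$ implies $\mathbf{I}(\mathbf{p})\ge\mathbf{I}(\mathbf{p}')$; (scalability) for every $\alpha>1$, $\alpha\mathbf{I}(\mathbf{p})>\mathbf{I}(\alpha\mathbf{p})$. *)

theory Defs
  imports Complex_Main
begin

definition nonneg_vec :: "('n \<Rightarrow> real) \<Rightarrow> bool" where
  "nonneg_vec p \<longleftrightarrow> (\<forall>i. 0 \<le> p i)"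

definition standard_interference :: "(('n \<Rightarrow> real) \<Rightarrow> ('n \<Rightarrow> real)) \<Rightarrow> bool" where
  "standard_interference I \<longleftrightarrow>
     (\<forall>p. nonneg_vec p \<longrightarrow> (\<forall>i. I p i > 0)) \<and>
     (\<forall>p p'. nonneg_vec p \<and> nonneg_vec p' \<and> (\<forall>i. p' i \<le> p i) \<longrightarrow> (\<forall>i. I p' i \<le> I p i)) \<and>
     (\<forall>p \<alpha>. nonneg_vec p \<and> \<alpha> > 1 \<longrightarrow> (\<forall>i. \<alpha> * I p i > I (\<lambda>k. \<alpha> * p k) i))"

definition interf :: "('n::finite \<Rightarrow> 'u \<Rightarrow> real) \<Rightarrow> real \<Rightarrow> ('n \<Rightarrow> real) \<Rightarrow> ('n \<Rightarrow> real) \<Rightarrow> 'n \<Rightarrow> 'u \<Rightarrow> real" where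
  "interf g \<sigma>2 x p i j = (\<Sum>k\<in>UNIV - {i}. p k * g k j * x k) + \<sigma>2"

definition h_fun :: "('n::finite \<Rightarrow> 'u set) \<Rightarrow> ('n \<Rightarrow> 'u \<Rightarrow> real) \<Rightarrow> real
     \<Rightarrow> ('n \<Rightarrow> real) \<Rightarrow> ('n \<Rightarrow> 'u \<Rightarrow> real) \<Rightarrow> ('n \<Rightarrow> real) \<Rightarrow> ('n \<Rightarrow> real)" where
  "h_fun J g \<sigma>2 x r p = (\<lambda>i. THE q. q > 0 \<and>
      1 = (\<Sum>j\<in>J i. (r i j / x i) / ln (1 + q * (g i j / interf g \<sigma>2 x p i j))))"

end

theory Submission
  imports Defs
begin

text \<open>For fixed base station i write c_j = r_ij / x_i and a_j(p) = g_ij / interf_ij(p). The load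
  \<Sum>j c_j / ln(1 + q a_j) is continuous and strictly decreasing in q, running from \<infinity> to 0, so
  h_i(p) is its unique root q(a). The root is antitone in a and scales exactly: q(\<alpha> a) = q(a) / \<alpha>.
  Raising the powers only raises the interference, so a(p) decreases and h is monotone. Scaling the
  powers by \<alpha> > 1 multiplies the interference by strictly less than \<alpha> because of the noise, so
  \<alpha> a(\<alpha> p) > a(p) and h(\<alpha> p) = \<alpha> q(\<alpha> a(\<alpha> p)) < \<alpha> q(a(p)) = \<alpha> h(p).\<close>

definition load :: "'u set \<Rightarrow> ('u \<Rightarrow> real) \<Rightarrow> ('u \<Rightarrow> real) \<Rightarrow> real" where
  "load A c s = (\<Sum>j\<in>A. c j / ln (1 + s j))"

definition load_root :: "'u set \<Rightarrow> ('u \<Rightarrow> real) \<Rightarrow> ('u \<Rightarrow> real) \<Rightarrow> real" where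
  "load_root A c a = (THE q. q > 0 \<and> 1 = load A c (\<lambda>j. q * a j))"

locale load_equation =
  fixes A :: "'u set" and c :: "'u \<Rightarrow> real"
  assumes finite_A: "finite A"
    and A_nonempty: "A \<noteq> {}"
    and c_pos: "\<And>j. j \<in> A \<Longrightarrow> 0 < c j"
begin

lemma load_antimono:
  assumes "\<And>j. j \<in> A \<Longrightarrow> 0 < s j \<and> s j \<le> s' j"
  shows "load A c s' \<le> load A c s"
  unfolding load_def
proof (rule sum_mono)
  fix j assume j: "j \<in> A"
  have "0 < ln (1 + s j)" using assms[OF j] by simp
  moreover have "ln (1 + s j) \<le> ln (1 + s' j)" using assms[OF j] by simp
  ultimately show "c j / ln (1 + s' j) \<le> c j / ln (1 + s j)"
    using c_pos[OF j] by (simp add: frac_le)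
qed

lemma load_strict_antimono:
  assumes "\<And>j. j \<in> A \<Longrightarrow> 0 < s j \<and> s j < s' j"
  shows "load A c s' < load A c s"
  unfolding load_def
proof (rule sum_strict_mono[OF finite_A A_nonempty])
  fix j assume j: "j \<in> A"
  have "0 < ln (1 + s j)" using assms[OF j] by simp
  moreover have "ln (1 + s j) < ln (1 + s' j)" using assms[OF j] by simp
  ultimately show "c j / ln (1 + s' j) < c j / ln (1 + s j)"
    using c_pos[OF j] by (simp add: divide_strict_left_mono)
qed

lemma card_A_ge_one: "1 \<le> real (card A)"
  using finite_A A_nonempty by (simp add: Suc_leI card_gt_0_iff)

lemma load_ge_one:
  assumes "\<And>j. j \<in> A \<Longrightarrow> 0 < s j" and j0: "j0 \<in> A" and "s j0 \<le> exp (c j0) - 1"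
  shows "1 \<le> load A c s"
proof -
  have "ln (1 + s j0) \<le> c j0"
    using ln_le_cancel_iff[of "1 + s j0" "exp (c j0)"] assms(1)[OF j0] assms(3) by simp
  then have "1 \<le> c j0 / ln (1 + s j0)"
    using assms(1)[OF j0] by (simp add: le_divide_eq_1)
  also have "\<dots> \<le> load A c s"
    unfolding load_def
  proof (rule member_le_sum[OF j0 _ finite_A])
    fix j assume "j \<in> A - {j0}"
    then show "0 \<le> c j / ln (1 + s j)"
      using assms(1)[of j] c_pos[of j] by (auto intro!: divide_nonneg_pos)
  qed
  finally show ?thesis .
qed

lemma load_le_one:
  assumes "\<And>j. j \<in> A \<Longrightarrow> exp (card A * c j) \<le> s j"
  shows "load A c s \<le> 1"
proof -
  have "load A c s \<le> (\<Sum>j\<in>A. 1 / card A)"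
    unfolding load_def
  proof (rule sum_mono)
    fix j assume j: "j \<in> A"
    have "exp (card A * c j) \<le> 1 + s j" using assms[OF j] by linarith
    moreover have "0 < 1 + s j" using assms[OF j] exp_gt_zero[of "card A * c j"] by linarith
    ultimately have "card A * c j \<le> ln (1 + s j)" by (simp add: ln_ge_iff)
    moreover have "0 < card A * c j" using card_A_ge_one c_pos[OF j] by simp
    ultimately have "c j / ln (1 + s j) \<le> c j / (card A * c j)"
      using c_pos[OF j] by (intro frac_le) auto
    then show "c j / ln (1 + s j) \<le> 1 / card A" using c_pos[OF j] by simp
  qed
  also have "\<dots> = 1" using card_A_ge_one by simp
  finally show ?thesis .
qed

context
  fixes a :: "'u \<Rightarrow> real"
  assumes a_pos: "\<And>j. j \<in> A \<Longrightarrow> 0 < a j"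
begin

lemma load_scaled_strict_antimono:
  "0 < q \<Longrightarrow> q < q' \<Longrightarrow> load A c (\<lambda>j. q' * a j) < load A c (\<lambda>j. q * a j)"
  using a_pos by (intro load_strict_antimono) auto

lemma continuous_on_load_scaled: "continuous_on {0<..} (\<lambda>q. load A c (\<lambda>j. q * a j))"
  unfolding load_def
proof (intro continuous_intros ballI)
  fix j and q :: real assume "j \<in> A" "q \<in> {0<..}"
  then have "0 < q * a j" using a_pos by simp
  then show "1 + q * a j \<noteq> 0" and "ln (1 + q * a j) \<noteq> 0" by auto
qed

lemma load_root_exists: "\<exists>q>0. load A c (\<lambda>j. q * a j) = 1"
proof -
  obtain j0 where j0: "j0 \<in> A" using A_nonempty by blast
  define ql where "ql = (exp (c j0) - 1) / a j0"
  define qh where "qh = (\<Sum>j\<in>A. exp (card A * c j) / a j)"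
  have ql_pos: "0 < ql" unfolding ql_def using c_pos[OF j0] a_pos[OF j0] by simp
  have below_qh: "exp (card A * c j) / a j \<le> qh" if "j \<in> A" for j
    unfolding qh_def using finite_A a_pos that
    by (intro member_le_sum) (auto intro: divide_nonneg_pos less_imp_le)
  have "exp (c j0) \<le> exp (card A * c j0)" using card_A_ge_one c_pos[OF j0] by simp
  then have "exp (c j0) - 1 \<le> exp (card A * c j0)" by linarith
  then have "ql \<le> exp (card A * c j0) / a j0"
    unfolding ql_def using a_pos[OF j0] by (intro divide_right_mono) simp_all
  with below_qh[OF j0] have "ql \<le> qh" by linarith
  moreover have "1 \<le> load A c (\<lambda>j. ql * a j)"
  proof (rule load_ge_one[OF _ j0])
    show "\<And>j. j \<in> A \<Longrightarrow> 0 < ql * a j" using ql_pos a_pos by simp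
    show "ql * a j0 \<le> exp (c j0) - 1" unfolding ql_def using a_pos[OF j0] by simp
  qed
  moreover have "load A c (\<lambda>j. qh * a j) \<le> 1"
    using below_qh a_pos by (intro load_le_one) (simp add: divide_le_eq)
  moreover have "continuous_on {ql..qh} (\<lambda>q. load A c (\<lambda>j. q * a j))"
    using ql_pos by (intro continuous_on_subset[OF continuous_on_load_scaled]) auto
  ultimately obtain q where "ql \<le> q" "load A c (\<lambda>j. q * a j) = 1"
    using IVT2'[of "\<lambda>q. load A c (\<lambda>j. q * a j)" qh 1 ql] by blast
  with ql_pos show ?thesis by (intro exI[of _ q]) simp
qed

lemma load_root_eqI:
  assumes "0 < q" "load A c (\<lambda>j. q * a j) = 1"
  shows "load_root A c a = q"
  unfolding load_root_def
proof (rule the_equality)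
  fix q' assume q': "0 < q' \<and> 1 = load A c (\<lambda>j. q' * a j)"
  show "q' = q"
    using load_scaled_strict_antimono[of q q'] load_scaled_strict_antimono[of q' q] assms q'
    by (cases q q' rule: linorder_cases) auto
qed (use assms in simp)

lemma load_root: "0 < load_root A c a" "load A c (\<lambda>j. load_root A c a * a j) = 1"
  using load_root_exists load_root_eqI by auto

end

lemma load_root_scale:
  assumes "\<And>j. j \<in> A \<Longrightarrow> 0 < a j" and "0 < \<alpha>"
  shows "load_root A c (\<lambda>j. \<alpha> * a j) = load_root A c a / \<alpha>"
proof (rule load_root_eqI)
  show "\<And>j. j \<in> A \<Longrightarrow> 0 < \<alpha> * a j" using assms by simp
qed (use load_root[OF assms(1)] assms(2) in simp_all)

lemma load_root_antimono:
  assumes "\<And>j. j \<in> A \<Longrightarrow> 0 < a j \<and> a j \<le> a' j"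
  shows "load_root A c a' \<le> load_root A c a"
proof (rule ccontr)
  let ?q = "load_root A c a" and ?q' = "load_root A c a'"
  have a: "\<And>j. j \<in> A \<Longrightarrow> 0 < a j" and a': "\<And>j. j \<in> A \<Longrightarrow> 0 < a' j"
    using assms by (auto intro: less_le_trans)
  assume "\<not> ?q' \<le> ?q"
  then have "load A c (\<lambda>j. ?q' * a' j) < load A c (\<lambda>j. ?q * a' j)"
    using load_scaled_strict_antimono[OF a'] load_root(1)[OF a] by simp
  also have "\<dots> \<le> load A c (\<lambda>j. ?q * a j)"
    using assms load_root(1)[OF a] by (intro load_antimono) (auto intro: mult_left_mono)
  finally show False using load_root(2)[OF a] load_root(2)[OF a'] by simp
qed

lemma load_root_strict_antimono:
  assumes "\<And>j. j \<in> A \<Longrightarrow> 0 < a j \<and> a j < a' j"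
  shows "load_root A c a' < load_root A c a"
proof (rule ccontr)
  let ?q = "load_root A c a" and ?q' = "load_root A c a'"
  have a: "\<And>j. j \<in> A \<Longrightarrow> 0 < a j" and a': "\<And>j. j \<in> A \<Longrightarrow> 0 < a' j"
    using assms by (auto intro: less_trans)
  assume "\<not> ?q' < ?q"
  then have "load A c (\<lambda>j. ?q' * a' j) \<le> load A c (\<lambda>j. ?q * a' j)"
    using load_root(1)[OF a] a' by (intro load_antimono) (auto intro: mult_right_mono less_imp_le)
  also have "\<dots> < load A c (\<lambda>j. ?q * a j)"
    using assms load_root(1)[OF a] by (intro load_strict_antimono) auto
  finally show False using load_root(2)[OF a] load_root(2)[OF a'] by simp
qed

end

definition sinr_gain :: "('n::finite \<Rightarrow> 'u \<Rightarrow> real) \<Rightarrow> real \<Rightarrow> ('n \<Rightarrow> real) \<Rightarrow> ('n \<Rightarrow> real) \<Rightarrow> 'n \<Rightarrow> 'u \<Rightarrow> real" where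
  "sinr_gain g \<sigma>2 x p i j = g i j / interf g \<sigma>2 x p i j"

lemma h_fun_eq_load_root:
  "h_fun J g \<sigma>2 x r p i = load_root (J i) (\<lambda>j. r i j / x i) (sinr_gain g \<sigma>2 x p i)"
  unfolding h_fun_def load_root_def load_def sinr_gain_def by simp

locale network =
  fixes g :: "'n::finite \<Rightarrow> 'u \<Rightarrow> real" and \<sigma>2 :: real and x :: "'n \<Rightarrow> real"
  assumes g_pos: "\<And>k j. 0 < g k j" and \<sigma>_pos: "0 < \<sigma>2" and x_pos: "\<And>k. 0 < x k"
begin

lemma interf_mono:
  assumes "\<And>k. p' k \<le> p k"
  shows "interf g \<sigma>2 x p' i j \<le> interf g \<sigma>2 x p i j"
  unfolding interf_def using assms g_pos x_pos
  by (intro add_right_mono sum_mono) (auto intro: mult_right_mono less_imp_le)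

lemma interf_pos:
  assumes "nonneg_vec p"
  shows "0 < interf g \<sigma>2 x p i j"
proof -
  have "0 \<le> (\<Sum>k\<in>UNIV - {i}. p k * g k j * x k)"
    using assms g_pos x_pos unfolding nonneg_vec_def by (intro sum_nonneg) (simp add: less_imp_le)
  then show ?thesis unfolding interf_def using \<sigma>_pos by simp
qed

lemma interf_scale_less:
  assumes "1 < \<alpha>"
  shows "interf g \<sigma>2 x (\<lambda>k. \<alpha> * p k) i j < \<alpha> * interf g \<sigma>2 x p i j"
proof -
  have "interf g \<sigma>2 x (\<lambda>k. \<alpha> * p k) i j = \<alpha> * (\<Sum>k\<in>UNIV - {i}. p k * g k j * x k) + \<sigma>2"
    unfolding interf_def by (simp add: sum_distrib_left mult.assoc)
  also have "\<dots> < \<alpha> * interf g \<sigma>2 x p i j"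
    unfolding interf_def distrib_left using mult_strict_right_mono[OF assms \<sigma>_pos] by simp
  finally show ?thesis .
qed

lemma sinr_gain_pos: "nonneg_vec p \<Longrightarrow> 0 < sinr_gain g \<sigma>2 x p i j"
  unfolding sinr_gain_def using interf_pos g_pos by simp

lemma sinr_gain_antimono:
  assumes "nonneg_vec p'" "\<forall>k. p' k \<le> p k"
  shows "sinr_gain g \<sigma>2 x p i j \<le> sinr_gain g \<sigma>2 x p' i j"
  unfolding sinr_gain_def using assms interf_pos interf_mono g_pos[of i j]
  by (intro frac_le) (auto intro: less_imp_le)

lemma sinr_gain_scale_less:
  assumes "nonneg_vec p" "1 < \<alpha>"
  shows "sinr_gain g \<sigma>2 x p i j < \<alpha> * sinr_gain g \<sigma>2 x (\<lambda>k. \<alpha> * p k) i j"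
proof -
  let ?I\<alpha> = "interf g \<sigma>2 x (\<lambda>k. \<alpha> * p k) i j"
  have "nonneg_vec (\<lambda>k. \<alpha> * p k)" using assms unfolding nonneg_vec_def by simp
  then have pos: "0 < ?I\<alpha> / \<alpha>" using interf_pos assms(2) by simp
  have less: "?I\<alpha> / \<alpha> < interf g \<sigma>2 x p i j"
    using interf_scale_less[OF assms(2)] assms(2) by (simp add: divide_less_eq mult.commute)
  have "g i j / interf g \<sigma>2 x p i j < g i j / (?I\<alpha> / \<alpha>)"
    using divide_strict_left_mono[OF less g_pos mult_pos_pos[OF interf_pos[OF assms(1)] pos]] .
  then show ?thesis unfolding sinr_gain_def by (simp add: ac_simps)
qed

end

theorem lemma5:
  fixes J :: "'n::finite \<Rightarrow> 'u set"
    and g :: "'n \<Rightarrow> 'u \<Rightarrow> real"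
    and \<sigma>2 :: real
    and x :: "'n \<Rightarrow> real"
    and r :: "'n \<Rightarrow> 'u \<Rightarrow> real"
  assumes J_fin: "\<And>i. finite (J i)"
    and J_ne: "\<And>i. J i \<noteq> {}"
    and J_disj: "\<And>i i'. i \<noteq> i' \<Longrightarrow> J i \<inter> J i' = {}"
    and g_pos: "\<And>k j. g k j > 0"
    and \<sigma>_pos: "\<sigma>2 > 0"
    and x_pos: "\<And>i. x i > 0"
    and r_pos: "\<And>i j. j \<in> J i \<Longrightarrow> r i j > 0"
  shows "standard_interference (h_fun J g \<sigma>2 x r)"
proof -
  interpret network g \<sigma>2 x using g_pos \<sigma>_pos x_pos by unfold_locales
  have eq: "load_equation (J i) (\<lambda>j. r i j / x i)" for i
    using J_fin J_ne r_pos x_pos by unfold_locales auto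
  have h_pos: "0 < h_fun J g \<sigma>2 x r p i" if "nonneg_vec p" for p i
    unfolding h_fun_eq_load_root using load_equation.load_root(1)[OF eq] sinr_gain_pos[OF that] .
  have mono: "h_fun J g \<sigma>2 x r p' i \<le> h_fun J g \<sigma>2 x r p i"
    if "nonneg_vec p" "nonneg_vec p'" "\<forall>k. p' k \<le> p k" for p p' i
    unfolding h_fun_eq_load_root using that sinr_gain_pos sinr_gain_antimono
    by (intro load_equation.load_root_antimono[OF eq]) simp
  have scal: "h_fun J g \<sigma>2 x r (\<lambda>k. \<alpha> * p k) i < \<alpha> * h_fun J g \<sigma>2 x r p i"
    if p: "nonneg_vec p" and \<alpha>: "1 < \<alpha>" for p \<alpha> i
  proof -
    let ?c = "\<lambda>j. r i j / x i" and ?p\<alpha> = "\<lambda>k. \<alpha> * p k"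
    have "nonneg_vec ?p\<alpha>" using p \<alpha> unfolding nonneg_vec_def by simp
    then have "h_fun J g \<sigma>2 x r ?p\<alpha> i / \<alpha>
        = load_root (J i) ?c (\<lambda>j. \<alpha> * sinr_gain g \<sigma>2 x ?p\<alpha> i j)"
      unfolding h_fun_eq_load_root using sinr_gain_pos \<alpha>
      by (subst load_equation.load_root_scale[OF eq]) simp_all
    also have "\<dots> < h_fun J g \<sigma>2 x r p i"
      unfolding h_fun_eq_load_root using sinr_gain_pos[OF p] sinr_gain_scale_less[OF p \<alpha>]
      by (intro load_equation.load_root_strict_antimono[OF eq]) simp
    finally show ?thesis using \<alpha> by (simp add: pos_divide_less_eq mult.commute)
  qed
  show ?thesis
    unfolding standard_interference_def by (intro conjI allI impI) (use h_pos mono scal in auto)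
qed

end
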